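(* Let $n\ge 3$ and let $v_1,\dots,v_n:2^{[n]}\to\mathbb{R}$ be functions such that for every $i$: $v_i(S)\ge 0$; $v_i(S)=0$ if $i\notin S$; $v_i(S)\le v_i(R)$ whenever $S\subseteq R$; and $v_i(S\cup R)\le v_i(S)+v_i(R)$ for all $S,R\subseteq[n]$ with $i\in S\cap R$. Let $(p^*,S)$ be an optimal solution of $\mathcal{F}^{(3)}$, i.e. $S\subseteq[n]$, $|S|\ge 3$, $p^*\ge 0$, $v_i(S)\ge p^*$ for all $i\in S$, and $p^*|S|$ equals $\max\{c|S'| : c\ge 0, S'\subseteq[n], |S'|\ge 3, v_i(S')\ge c\ \forall i\in S'\}$. Let $A,B,C$ be a partition of $[n]$ (parts may be empty). For $X\in\{A,B\}$ define $r_X(C)=\max\{c\cdot|T| : c\ge 0,\ T\subseteq C,\ v_i(T\cup X)\ge c\text{ for all } i\in T\}$, let $r(C)=\max\{r_A(C),r_B(C)\}$ and $r_{\mathcal{F}}(C)=|S\cap C|\cdot p^*$. Then $r(C)\ge r_{\mathcal{F}}(C)/4$. *)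

theory Defs
  imports Complex_Main
begin

definition F3_feasible :: "nat \<Rightarrow> (nat \<Rightarrow> nat set \<Rightarrow> real) \<Rightarrow> real \<Rightarrow> nat set \<Rightarrow> bool" where
  "F3_feasible n v c S' \<longleftrightarrow> S' \<subseteq> {1..n} \<and> card S' \<ge> 3 \<and> c \<ge> 0 \<and> (\<forall>i\<in>S'. v i S' \<ge> c)"

definition F3_value :: "nat \<Rightarrow> (nat \<Rightarrow> nat set \<Rightarrow> real) \<Rightarrow> real" where
  "F3_value n v = Sup {c * real (card S') | c S'. F3_feasible n v c S'}"

definition F3_optimal :: "nat \<Rightarrow> (nat \<Rightarrow> nat set \<Rightarrow> real) \<Rightarrow> real \<Rightarrow> nat set \<Rightarrow> bool" where
  "F3_optimal n v p S \<longleftrightarrow> F3_feasible n v p S \<and> p * real (card S) = F3_value n v"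

definition r_X :: "(nat \<Rightarrow> nat set \<Rightarrow> real) \<Rightarrow> nat set \<Rightarrow> nat set \<Rightarrow> real" where
  "r_X v X C = Sup {c * real (card T) | c T. c \<ge> 0 \<and> T \<subseteq> C \<and> (\<forall>i\<in>T. v i (T \<union> X) \<ge> c)}"

end

theory Submission
  imports Defs
begin

text \<open>
  Let \<open>T = S \<inter> C\<close>; every agent of \<open>T\<close> values \<open>T \<union> A \<union> B \<supseteq> S\<close> at least \<open>p\<close>.
  Take \<open>Q \<subseteq> T\<close> maximal such that every agent of \<open>Q\<close> values \<open>Q \<union> B\<close> at least \<open>p/2\<close>.
  For \<open>i \<in> T - Q\<close>, maximality gives \<open>v i (insert i (Q \<union> B)) < p/2\<close>, so subadditivity
  forces \<open>v i ((T - Q) \<union> A) \<ge> p/2\<close>. Hence \<open>r_A(C) + r_B(C) \<ge> (p/2) |T|\<close>, and the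
  larger of the two is at least \<open>p |T| / 4\<close>.
\<close>

definition supports :: "(nat \<Rightarrow> nat set \<Rightarrow> real) \<Rightarrow> real \<Rightarrow> nat set \<Rightarrow> nat set \<Rightarrow> bool" where
  "supports v c X T \<longleftrightarrow> (\<forall>i\<in>T. c \<le> v i (T \<union> X))"

lemma supports_insert:
  assumes mono: "\<And>i S R. i \<in> {1..n} \<Longrightarrow> S \<subseteq> R \<Longrightarrow> R \<subseteq> {1..n} \<Longrightarrow> v i S \<le> v i R"
    and supp: "supports v c X Q"
    and carrier: "insert i (Q \<union> X) \<subseteq> {1..n}"
    and new: "c \<le> v i (insert i (Q \<union> X))"
  shows "supports v c X (insert i Q)"
  unfolding supports_def
proof
  fix j assume j: "j \<in> insert i Q"
  show "c \<le> v j (insert i Q \<union> X)"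
  proof (cases "j = i")
    case True
    then show ?thesis using new by simp
  next
    case False
    with j have "j \<in> Q" by simp
    then have "c \<le> v j (Q \<union> X)" using supp by (simp add: supports_def)
    also have "\<dots> \<le> v j (insert i Q \<union> X)"
      by (rule mono) (use \<open>j \<in> Q\<close> carrier in auto)
    finally show ?thesis .
  qed
qed

lemma supports_split:
  assumes mono: "\<And>i S R. i \<in> {1..n} \<Longrightarrow> S \<subseteq> R \<Longrightarrow> R \<subseteq> {1..n} \<Longrightarrow> v i S \<le> v i R"
    and subadd: "\<And>i S R. i \<in> {1..n} \<Longrightarrow> S \<subseteq> {1..n} \<Longrightarrow> R \<subseteq> {1..n} \<Longrightarrow>
                   i \<in> S \<inter> R \<Longrightarrow> v i (S \<union> R) \<le> v i S + v i R"
    and fin: "finite T"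
    and carrier: "T \<union> A \<union> B \<subseteq> {1..n}"
    and large: "\<And>i. i \<in> T \<Longrightarrow> 2 * c \<le> v i (T \<union> A \<union> B)"
  shows "\<exists>Q\<subseteq>T. supports v c B Q \<and> supports v c A (T - Q)"
proof -
  define F where "F = {Q. Q \<subseteq> T \<and> supports v c B Q}"
  have "finite F" unfolding F_def using fin by simp
  moreover have "{} \<in> F" unfolding F_def supports_def by simp
  ultimately obtain Q where "Q \<in> F" and Q_max: "\<forall>Q'\<in>F. Q \<subseteq> Q' \<longrightarrow> Q = Q'"
    using finite_has_maximal[of F] by blast
  then have QT: "Q \<subseteq> T" and supp_Q: "supports v c B Q" by (auto simp: F_def)
  have "supports v c A (T - Q)"
    unfolding supports_def
  proof (rule ballI, rule ccontr)
    fix i assume i: "i \<in> T - Q" and small: "\<not> c \<le> v i ((T - Q) \<union> A)"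
    have i_n: "i \<in> {1..n}" and P_n: "(T - Q) \<union> A \<subseteq> {1..n}"
      and Q_n: "insert i (Q \<union> B) \<subseteq> {1..n}"
      using i QT carrier by auto
    have "2 * c \<le> v i (T \<union> A \<union> B)" using large i by simp
    also have "\<dots> \<le> v i (((T - Q) \<union> A) \<union> insert i (Q \<union> B))"
      by (rule mono[OF i_n]) (use P_n Q_n in auto)
    also have "\<dots> \<le> v i ((T - Q) \<union> A) + v i (insert i (Q \<union> B))"
      using subadd[OF i_n P_n Q_n] i by simp
    finally have "c \<le> v i (insert i (Q \<union> B))" using small by linarith
    then have "insert i Q \<in> F"
      using supports_insert[OF mono supp_Q Q_n] i QT by (simp add: F_def)
    with Q_max i show False by blast
  qed
  with QT supp_Q show ?thesis by blast
qed

lemma r_X_ge_supports: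
  assumes mono: "\<And>i S R. i \<in> {1..n} \<Longrightarrow> S \<subseteq> R \<Longrightarrow> R \<subseteq> {1..n} \<Longrightarrow> v i S \<le> v i R"
    and X: "X \<subseteq> {1..n}" and C: "C \<subseteq> {1..n}"
    and T: "T \<subseteq> C" and c: "0 \<le> c" and supp: "supports v c X T"
  shows "c * real (card T) \<le> r_X v X C"
proof -
  let ?Z = "{c * real (card T) | c T. c \<ge> 0 \<and> T \<subseteq> C \<and> (\<forall>i\<in>T. v i (T \<union> X) \<ge> c)}"
  define M where "M = (\<Sum>j\<in>{1..n}. \<bar>v j {1..n}\<bar>)"
  have "0 \<le> M" unfolding M_def by (intro sum_nonneg) simp
  have "z \<le> M * real n" if "z \<in> ?Z" for z
  proof -
    from that obtain d U where z: "z = d * real (card U)" and "0 \<le> d" and U: "U \<subseteq> C"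
      and supp_U: "\<forall>i\<in>U. d \<le> v i (U \<union> X)" by blast
    show ?thesis
    proof (cases "U = {}")
      case True
      then show ?thesis using z \<open>0 \<le> M\<close> by simp
    next
      case False
      then obtain i where "i \<in> U" by blast
      then have i_n: "i \<in> {1..n}" using U C by blast
      have "d \<le> v i (U \<union> X)" using supp_U \<open>i \<in> U\<close> by blast
      also have "\<dots> \<le> v i {1..n}" by (rule mono[OF i_n]) (use U C X in auto)
      also have "\<dots> \<le> \<bar>v i {1..n}\<bar>" by simp
      also have "\<dots> \<le> M" unfolding M_def using i_n by (intro member_le_sum) auto
      finally have "d \<le> M" by simp
      moreover have "card U \<le> n" using card_mono[of "{1..n}" U] U C by auto
      ultimately show ?thesis using z \<open>0 \<le> d\<close> \<open>0 \<le> M\<close> by (simp add: mult_mono)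
    qed
  qed
  then have "bdd_above ?Z" by (rule bdd_aboveI)
  moreover have "c * real (card T) \<in> ?Z" using T c supp by (auto simp: supports_def)
  ultimately show ?thesis unfolding r_X_def by (rule cSup_upper[rotated])
qed

theorem lemma2:
  fixes n :: nat and v :: "nat \<Rightarrow> nat set \<Rightarrow> real"
    and p :: real and S A B C :: "nat set"
  assumes n3: "n \<ge> 3"
    and nonneg: "\<And>i S. i \<in> {1..n} \<Longrightarrow> S \<subseteq> {1..n} \<Longrightarrow> v i S \<ge> 0"
    and zero_out: "\<And>i S. i \<in> {1..n} \<Longrightarrow> S \<subseteq> {1..n} \<Longrightarrow> i \<notin> S \<Longrightarrow> v i S = 0"
    and mono: "\<And>i S R. i \<in> {1..n} \<Longrightarrow> S \<subseteq> R \<Longrightarrow> R \<subseteq> {1..n} \<Longrightarrow> v i S \<le> v i R"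
    and subadd: "\<And>i S R. i \<in> {1..n} \<Longrightarrow> S \<subseteq> {1..n} \<Longrightarrow> R \<subseteq> {1..n} \<Longrightarrow>
                   i \<in> S \<inter> R \<Longrightarrow> v i (S \<union> R) \<le> v i S + v i R"
    and opt: "F3_optimal n v p S"
    and part: "A \<union> B \<union> C = {1..n}" "A \<inter> B = {}" "A \<inter> C = {}" "B \<inter> C = {}"
  shows "max (r_X v A C) (r_X v B C) \<ge> (real (card (S \<inter> C)) * p) / 4"
proof -
  have S: "S \<subseteq> {1..n}" and "0 \<le> p" and vS: "\<And>i. i \<in> S \<Longrightarrow> p \<le> v i S"
    using opt unfolding F3_optimal_def F3_feasible_def by auto
  have A: "A \<subseteq> {1..n}" and B: "B \<subseteq> {1..n}" and C: "C \<subseteq> {1..n}" using part(1) by auto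
  define T where "T = S \<inter> C"
  have "finite T" unfolding T_def using S finite_subset by blast
  have large: "2 * (p / 2) \<le> v i (T \<union> A \<union> B)" if "i \<in> T" for i
  proof -
    have "i \<in> S" using that by (simp add: T_def)
    then have "2 * (p / 2) \<le> v i S" using vS by simp
    also have "\<dots> \<le> v i (T \<union> A \<union> B)"
      by (rule mono) (use \<open>i \<in> S\<close> S A B C part(1) in \<open>auto simp: T_def\<close>)
    finally show ?thesis .
  qed
  have carrier: "T \<union> A \<union> B \<subseteq> {1..n}" using S A B by (auto simp: T_def)
  obtain Q where QT: "Q \<subseteq> T" and supp_B: "supports v (p / 2) B Q"
    and supp_A: "supports v (p / 2) A (T - Q)"
    using supports_split[where n=n and v=v and c="p / 2", OF mono subadd \<open>finite T\<close> carrier large] by blast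
  have "T \<subseteq> C" by (simp add: T_def)
  have "p / 2 \<ge> 0" using \<open>0 \<le> p\<close> by simp
  have r_A: "p / 2 * real (card (T - Q)) \<le> r_X v A C"
    by (rule r_X_ge_supports[where n=n and v=v, OF mono A C _ \<open>p / 2 \<ge> 0\<close> supp_A])
      (use \<open>T \<subseteq> C\<close> in auto)
  have r_B: "p / 2 * real (card Q) \<le> r_X v B C"
    by (rule r_X_ge_supports[where n=n and v=v, OF mono B C _ \<open>p / 2 \<ge> 0\<close> supp_B])
      (use QT \<open>T \<subseteq> C\<close> in auto)
  have "card T = card (T - Q) + card Q"
    using card_Diff_subset[OF finite_subset[OF QT \<open>finite T\<close>] QT] card_mono[OF \<open>finite T\<close> QT]
    by simp
  then have "real (card T) * p / 4 = (p / 2 * real (card (T - Q)) + p / 2 * real (card Q)) / 2"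
    by (simp add: field_simps)
  also have "\<dots> \<le> max (r_X v A C) (r_X v B C)" using r_A r_B by (simp add: max_def)
  finally show ?thesis by (simp add: T_def)
qed

end
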